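(* Let $\alpha,\beta,\lambda$ be constants with $\beta\ge 3+2\alpha$ and $0<\lambda<\alpha$. Let $U=[0,1]^2$, $S\subset U$ finite with $(0,0)\in S$, and let $t_i$ be a tile of the tiling of $U$ induced by $S$ (as in the context) that is a $\beta$-tile. Then $$\mathrm{area}(t_i)\le \frac{\beta}{2\lambda e^{\beta-3-2\alpha}}\bigl(\mathrm{area}(A_i)+\mathrm{area}(B_i)\bigr).$$
   Context: Tiling: fix a total order of $S$ in which $p$ precedes $q$ whenever $x(p)+y(p)>x(q)+y(q)$ (ties broken arbitrarily but consistently). Process the points in this order; from the current point cast a ray vertically upward and a ray horizontally rightward, each stopping when it hits the boundary of $U$ or a ray cast from a previously processed point. This partitions $U$ into tiles $t_1,\dots,t_n$, one per point $p_i\in S$: $t_i$ is a simple rectilinear polygon with lower-left corner $p_i$, whose bottom edge $a_i$ and left edge $b_i$ lie on the two rays cast from $p_i$, and whose remaining boundary is a staircase from the top end of $b_i$ to the right end of $a_i$. A concave corner of $t_i$ is a vertex with interior angle $270^\circ$. $t_i$ is a $\beta$-tile if every axis-parallel rectangle contained in $t_i$ has area less than $\frac1\beta\mathrm{area}(t_i)$. The right tip of $t_i$ is the smallest-area region among those of the form "all points of $t_i$ to the right of a vertical line through a concave corner of $t_i$" that have area at least $\frac{\alpha}{\beta}\mathrm{area}(t_i)$; the upper tip is defined analogously with horizontal lines through concave corners and points above them. The main body $t_i'$ consists of the points of $t_i$ not in either tip; $a_i'$ and $b_i'$ are its bottom and left edges (segments of $a_i$, $b_i$ starting at $p_i$),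 and $|\cdot|$ denotes length. $A_i$ is the parallelogram with vertices $p_i$, $p_i+(|a_i'|,0)$, $p_i+((1+\lambda)|a_i'|,-\lambda|a_i'|)$, $p_i+(\lambda|a_i'|,-\lambda|a_i'|)$ (base $a_i'$, height $\lambda|a_i'|$, lying below $a_i'$, other sides of slope $-1$). $B_i$ is the parallelogram with vertices $p_i$, $p_i+(0,|b_i'|)$, $p_i+(-\lambda|b_i'|,(1+\lambda)|b_i'|)$, $p_i+(-\lambda|b_i'|,\lambda|b_i'|)$. *)

theory Defs
  imports "HOL-Analysis.Analysis"
begin

type_synonym pt = "real \<times> real"

definition unit_square :: "pt set" where
  "unit_square = {z. 0 \<le> fst z \<and> fst z \<le> 1 \<and> 0 \<le> snd z \<and> snd z \<le> 1}"

definition dominates :: "pt \<Rightarrow> pt \<Rightarrow> bool" where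
  "dominates p z \<longleftrightarrow> fst p \<le> fst z \<and> snd p \<le> snd z"

definition processing_order :: "pt set \<Rightarrow> pt list \<Rightarrow> bool" where
  "processing_order S ps \<longleftrightarrow> distinct ps \<and> set ps = S \<and>
     sorted_wrt (\<lambda>p q. fst q + snd q \<le> fst p + snd p) ps"

(* The tile of the i-th processed point: the closed region cut out by the ray construction.
   A point z of U lies in the tile of the first-processed point of S that lies weakly
   lower-left of z. *)
definition tile :: "pt list \<Rightarrow> nat \<Rightarrow> pt set" where
  "tile ps i = closure {z \<in> unit_square. dominates (ps ! i) z \<and>
                         (\<forall>j<i. \<not> dominates (ps ! j) z)}"

definition area :: "pt set \<Rightarrow> real" where
  "area X = measure lebesgue X"

definition beta_tile :: "real \<Rightarrow> pt set \<Rightarrow> bool" where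
  "beta_tile \<beta> t \<longleftrightarrow>
     (\<forall>a b c d. a \<le> b \<and> c \<le> d \<and> {a..b} \<times> {c..d} \<subseteq> t \<longrightarrow>
        (b - a) * (d - c) < area t / \<beta>)"

(* c is a vertex of the polygon t with interior angle 270 degrees: near c, the interior of t
   is a disc minus one closed quadrant with apex c *)
definition concave_corner :: "pt set \<Rightarrow> pt \<Rightarrow> bool" where
  "concave_corner t c \<longleftrightarrow>
     (\<exists>\<epsilon>>0. \<exists>sx sy. sx \<in> {-1, 1::real} \<and> sy \<in> {-1, 1::real} \<and>
        ball c \<epsilon> \<inter> interior t =
        ball c \<epsilon> - {z. 0 \<le> sx * (fst z - fst c) \<and> 0 \<le> sy * (snd z - snd c)})"

definition right_part :: "pt set \<Rightarrow> pt \<Rightarrow> pt set" where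
  "right_part t c = {z \<in> t. fst c < fst z}"

definition upper_part :: "pt set \<Rightarrow> pt \<Rightarrow> pt set" where
  "upper_part t c = {z \<in> t. snd c < snd z}"

definition right_tip :: "real \<Rightarrow> real \<Rightarrow> pt set \<Rightarrow> pt set \<Rightarrow> bool" where
  "right_tip \<alpha> \<beta> t T \<longleftrightarrow>
     (\<exists>c. concave_corner t c \<and> T = right_part t c \<and> \<alpha> / \<beta> * area t \<le> area T \<and>
        (\<forall>c'. concave_corner t c' \<and> \<alpha> / \<beta> * area t \<le> area (right_part t c') \<longrightarrow>
              area T \<le> area (right_part t c')))"

definition upper_tip :: "real \<Rightarrow> real \<Rightarrow> pt set \<Rightarrow> pt set \<Rightarrow> bool" where
  "upper_tip \<alpha> \<beta> t T \<longleftrightarrow>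
     (\<exists>c. concave_corner t c \<and> T = upper_part t c \<and> \<alpha> / \<beta> * area t \<le> area T \<and>
        (\<forall>c'. concave_corner t c' \<and> \<alpha> / \<beta> * area t \<le> area (upper_part t c') \<longrightarrow>
              area T \<le> area (upper_part t c')))"

(* lengths of the bottom edge a' and left edge b' of a main body M with lower-left corner p *)
definition bottom_len :: "pt \<Rightarrow> pt set \<Rightarrow> real" where
  "bottom_len p M = measure lebesgue {x. (x, snd p) \<in> M}"

definition left_len :: "pt \<Rightarrow> pt set \<Rightarrow> real" where
  "left_len p M = measure lebesgue {y. (fst p, y) \<in> M}"

definition par_A :: "real \<Rightarrow> pt \<Rightarrow> real \<Rightarrow> pt set" where
  "par_A lam p a = convex hull {p, (fst p + a, snd p),
      (fst p + (1 + lam) * a, snd p - lam * a), (fst p + lam * a, snd p - lam * a)}"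

definition par_B :: "real \<Rightarrow> pt \<Rightarrow> real \<Rightarrow> pt set" where
  "par_B lam p b = convex hull {p, (fst p, snd p + b),
      (fst p - lam * b, snd p + (1 + lam) * b), (fst p - lam * b, snd p + lam * b)}"

end

theory Submission
  imports Defs
begin

(* Let R = area t / beta, so every axis-parallel rectangle inside the tile has area less than R.
   Each tip has area less than (alpha + 1) R: otherwise cut the right tip at the next concave
   corner further right; what is removed lies in a rectangle of the tile, so less than R is lost,
   and the remaining right part is a smaller region of area at least alpha R, contradicting the
   minimality of the tip. The upper tip is the right tip of the tile reflected in the diagonal.
   Hence the main body M has area more than (beta - 2 alpha - 2) R. Every point z of M spans with
   p a rectangle inside the tile, so relative to p the body lies in
   {(x, y). 0 <= x <= a', 0 <= y <= b', x y <= R}, whose area is at most R (1 + ln (a' b' / R)).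
   This forces a' b' > R exp (beta - 3 - 2 alpha), and the parallelograms have total area
   lam (a'^2 + b'^2) >= 2 lam a' b'. *)

section \<open>Areas of planar sets\<close>

lemma area_nonneg: "0 \<le> area S"
  by (simp add: area_def)

lemma area_mono: "S \<subseteq> T \<Longrightarrow> S \<in> sets lebesgue \<Longrightarrow> T \<in> lmeasurable \<Longrightarrow> area S \<le> area T"
  unfolding area_def by (rule measure_mono_fmeasurable)

lemma area_Un_le: "S \<in> sets lebesgue \<Longrightarrow> T \<in> sets lebesgue \<Longrightarrow> area (S \<union> T) \<le> area S + area T"
  unfolding area_def by (rule measure_Un_le)

lemma area_le_Diff_add:
  assumes "T \<in> lmeasurable" "A \<in> lmeasurable" "B \<in> lmeasurable"
  shows "area T \<le> area (T - A - B) + area A + area B"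
proof -
  have D: "T - A - B \<in> lmeasurable"
    using assms by (intro fmeasurable_Diff fmeasurableD)
  then have "area T \<le> area ((T - A - B) \<union> A \<union> B)"
    using assms by (intro area_mono) (auto intro!: fmeasurable.Un intro: fmeasurableD)
  also have "\<dots> \<le> area ((T - A - B) \<union> A) + area B"
    using assms D by (intro area_Un_le) (auto intro: fmeasurableD)
  also have "\<dots> \<le> area (T - A - B) + area A + area B"
    using area_Un_le[of "T - A - B" A] assms D by (auto intro: fmeasurableD)
  finally show ?thesis .
qed

lemma box_Pair_eq: "box (a, c) (b, d) = {a<..<b} \<times> {c<..<d :: real}" for a b :: real
  by (auto simp: box_def Basis_prod_def Basis_real_def)

lemma area_cbox_Pair:
  "area (cbox (a, c) (b, d)) = (if a \<le> b \<and> c \<le> d then (b - a) * (d - c) else 0)"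
  by (simp add: area_def content_Pair)

lemma area_box_Pair:
  "area (box (a, c) (b, d)) = (if a \<le> b \<and> c \<le> d then (b - a) * (d - c) else 0)"
proof -
  have "measure lborel (box (a, c) (b, d)) = measure lborel (cbox (a, c) (b, d))"
    by (simp only: measure_lborel_box_eq measure_lborel_cbox_eq)
  then show ?thesis
    using area_cbox_Pair[of a c b d] by (simp add: area_def)
qed

lemma beta_tile_area_pos:
  assumes "beta_tile \<beta> t" "z \<in> t"
  shows "0 < area t / \<beta>"
proof -
  have "{fst z..fst z} \<times> {snd z..snd z} \<subseteq> t"
    using assms(2) by auto
  then have "(fst z - fst z) * (snd z - snd z) < area t / \<beta>"
    using assms(1) unfolding beta_tile_def by blast
  then show ?thesis
    by simp
qed

lemma area_cbox_less_beta:
  assumes "beta_tile \<beta> t" "0 < area t / \<beta>"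
    and "a < b \<Longrightarrow> c < d \<Longrightarrow> cbox (a, c) (b, d) \<subseteq> t"
  shows "area (cbox (a, c) (b, d)) < area t / \<beta>"
proof (cases "a < b \<and> c < d")
  case True
  then have "{a..b} \<times> {c..d} \<subseteq> t"
    using assms(3) by (simp add: cbox_Pair_eq)
  then show ?thesis
    using assms(1) True unfolding beta_tile_def by (simp add: area_cbox_Pair)
next
  case False
  then show ?thesis
    using assms(2) by (auto simp: area_cbox_Pair mult_le_0_iff)
qed

lemma emeasure_lborel_horizontal_slices:
  assumes "(H :: pt set) \<in> sets borel"
  shows "emeasure lborel H = (\<integral>\<^sup>+y. emeasure lborel ((\<lambda>x. (x, y)) -` H) \<partial>lborel)"
proof -
  have "emeasure lborel H = emeasure (lborel \<Otimes>\<^sub>M lborel) H"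
    by (simp add: lborel_prod)
  also have "\<dots> = (\<integral>\<^sup>+y. emeasure lborel ((\<lambda>x. (x, y)) -` H) \<partial>lborel)"
    using assms by (intro lborel_pair.emeasure_pair_measure_alt2) (simp only: lborel_prod sets_lborel)
  finally show ?thesis .
qed

lemma area_le_of_horizontal_slices:
  fixes H :: "pt set"
  assumes "(g has_integral I) {c..d}" "H \<in> sets borel" "\<And>y. y \<in> {c..d} \<Longrightarrow> 0 \<le> g y"
    and "\<And>y. y \<in> {c..d} \<Longrightarrow> \<exists>l. (\<lambda>x. (x, y)) -` H \<subseteq> {l..l + g y}"
    and "\<And>y. y \<notin> {c..d} \<Longrightarrow> (\<lambda>x. (x, y)) -` H = {}"
  shows "area H \<le> I"
proof -
  have slice: "emeasure lborel ((\<lambda>x. (x, y)) -` H) \<le> ennreal (g y) * indicator {c..d} y" for y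
  proof (cases "y \<in> {c..d}")
    case True
    then obtain l where "(\<lambda>x. (x, y)) -` H \<subseteq> {l..l + g y}"
      using assms(4) by blast
    then have "emeasure lborel ((\<lambda>x. (x, y)) -` H) \<le> emeasure lborel {l..l + g y}"
      by (rule emeasure_mono) simp
    then show ?thesis
      using True assms(3) by simp
  qed (use assms(5) in simp)
  have "emeasure lborel H \<le> (\<integral>\<^sup>+y. ennreal (g y) * indicator {c..d} y \<partial>lborel)"
    unfolding emeasure_lborel_horizontal_slices[OF assms(2)] by (rule nn_integral_mono) (rule slice)
  also have "\<dots> = ennreal I"
    using assms(3,1) by (rule nn_integral_has_integral_lebesgue')
  finally have "emeasure lborel H \<le> ennreal I" .
  moreover have "0 \<le> I"
    using assms(1,3) by (rule has_integral_nonneg)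
  ultimately show ?thesis
    using assms(2) by (simp add: area_def measure_def enn2real_leI)
qed

lemma area_eq_of_horizontal_slices:
  fixes H :: "pt set"
  assumes "H \<in> sets borel" "c \<le> d" "0 \<le> w"
    and "\<And>y. y \<in> {c..d} \<Longrightarrow> (\<lambda>x. (x, y)) -` H = {l y..l y + w}"
    and "\<And>y. y \<notin> {c..d} \<Longrightarrow> (\<lambda>x. (x, y)) -` H = {}"
  shows "area H = w * (d - c)"
proof -
  have "emeasure lborel H = (\<integral>\<^sup>+y. ennreal w * indicator {c..d} y \<partial>lborel)"
    unfolding emeasure_lborel_horizontal_slices[OF assms(1)]
  proof (rule nn_integral_cong)
    fix y
    show "emeasure lborel ((\<lambda>x. (x, y)) -` H) = ennreal w * indicator {c..d} y"
      by (cases "y \<in> {c..d}") (simp_all add: assms(3-5))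
  qed
  also have "\<dots> = ennreal (w * (d - c))"
    using assms(2,3) by (simp add: nn_integral_cmult_indicator ennreal_mult)
  finally show ?thesis
    using assms(1-3) by (simp add: area_def measure_def)
qed

lemma lmeasurable_horizontal_slice:
  fixes M :: "pt set"
  assumes "compact M"
  shows "{x. (x, y) \<in> M} \<in> lmeasurable"
proof (rule lmeasurable_compact)
  have "closed ((\<lambda>x. (x, y)) -` M)"
    using compact_imp_closed[OF assms] by (intro continuous_closed_vimage continuous_intros)
  moreover have "(\<lambda>x. (x, y)) -` M \<subseteq> fst ` M"
    by (metis fst_conv image_eqI subsetI vimageE)
  then have "bounded ((\<lambda>x. (x, y)) -` M)"
    using bounded_fst[OF compact_imp_bounded[OF assms]] by (rule bounded_subset[rotated])
  ultimately show "compact {x. (x, y) \<in> M}"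
    by (simp add: compact_eq_bounded_closed vimage_def)
qed

lemma lmeasurable_vertical_slice:
  fixes M :: "pt set"
  assumes "compact M"
  shows "{y. (x, y) \<in> M} \<in> lmeasurable"
proof (rule lmeasurable_compact)
  have "closed (Pair x -` M)"
    using compact_imp_closed[OF assms] by (intro continuous_closed_vimage continuous_intros)
  moreover have "Pair x -` M \<subseteq> snd ` M"
    by (metis snd_conv image_eqI subsetI vimageE)
  then have "bounded (Pair x -` M)"
    using bounded_snd[OF compact_imp_bounded[OF assms]] by (rule bounded_subset[rotated])
  ultimately show "compact {y. (x, y) \<in> M}"
    by (simp add: compact_eq_bounded_closed vimage_def)
qed

lemma le_bottom_len:
  assumes "compact M" "a \<le> b" "{a..b} \<times> {snd p} \<subseteq> M"
  shows "b - a \<le> bottom_len p M"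
proof -
  have "measure lebesgue {a..b} \<le> bottom_len p M"
    unfolding bottom_len_def using assms(3) lmeasurable_horizontal_slice[OF assms(1)]
    by (intro measure_mono_fmeasurable) auto
  then show ?thesis
    using assms(2) by simp
qed

lemma le_left_len:
  assumes "compact M" "a \<le> b" "{fst p} \<times> {a..b} \<subseteq> M"
  shows "b - a \<le> left_len p M"
proof -
  have "measure lebesgue {a..b} \<le> left_len p M"
    unfolding left_len_def using assms(3) lmeasurable_vertical_slice[OF assms(1)]
    by (intro measure_mono_fmeasurable) auto
  then show ?thesis
    using assms(2) by simp
qed

lemma right_part_lmeasurable:
  assumes "t \<in> lmeasurable"
  shows "right_part t c \<in> lmeasurable"
proof -
  have "right_part t c = t \<inter> {z. fst c < fst z}"
    by (auto simp: right_part_def)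
  moreover have "open {z :: pt. fst c < fst z}"
    by (intro open_Collect_less continuous_intros)
  ultimately show ?thesis
    using assms by (simp add: fmeasurable_Int_fmeasurable borel_open)
qed

lemma upper_part_lmeasurable:
  assumes "t \<in> lmeasurable"
  shows "upper_part t c \<in> lmeasurable"
proof -
  have "upper_part t c = t \<inter> {z. snd c < snd z}"
    by (auto simp: upper_part_def)
  moreover have "open {z :: pt. snd c < snd z}"
    by (intro open_Collect_less continuous_intros)
  ultimately show ?thesis
    using assms by (simp add: fmeasurable_Int_fmeasurable borel_open)
qed

lemma upper_part_borel:
  assumes "t \<in> sets borel"
  shows "upper_part t c \<in> sets borel"
proof -
  have "upper_part t c = t \<inter> {z. snd c < snd z}"
    by (auto simp: upper_part_def)
  moreover have "open {z :: pt. snd c < snd z}"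
    by (intro open_Collect_less continuous_intros)
  ultimately show ?thesis
    using assms by (simp add: borel_open sets.Int)
qed

lemma area_right_part_add_box_le:
  assumes "t \<in> lmeasurable" "box (fst c, y0) (fst c', y1) \<subseteq> t" "fst c \<le> fst c'" "y0 \<le> y1"
  shows "area (right_part t c') + (fst c' - fst c) * (y1 - y0) \<le> area (right_part t c)"
proof -
  let ?B = "box (fst c, y0) (fst c', y1)"
  have "?B \<inter> right_part t c' = {}"
    by (auto simp: box_Pair_eq right_part_def)
  then have "area ?B + area (right_part t c') = area (?B \<union> right_part t c')"
    unfolding area_def using right_part_lmeasurable[OF assms(1)] by (simp add: measure_Un3)
  also have "\<dots> \<le> area (right_part t c)"
  proof (rule area_mono)
    show "?B \<union> right_part t c' \<subseteq> right_part t c"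
      using assms(2,3) by (auto simp: box_Pair_eq right_part_def)
  qed (auto intro!: sets.Un fmeasurableD right_part_lmeasurable assms(1))
  finally show ?thesis
    using assms(3,4) by (simp add: area_box_Pair)
qed

section \<open>Tiles\<close>

definition free_region :: "pt \<Rightarrow> pt set \<Rightarrow> pt set" where
  "free_region p Q = {z \<in> unit_square. dominates p z \<and> (\<forall>q\<in>Q. \<not> dominates q z)}"

definition tile_at :: "pt \<Rightarrow> pt set \<Rightarrow> pt set" where
  "tile_at p Q = closure (free_region p Q)"

lemma tile_eq_tile_at: "tile ps i = tile_at (ps ! i) ((!) ps ` {..<i})"
  unfolding tile_def tile_at_def free_region_def by (rule arg_cong[where f = closure]) auto

lemma closed_unit_square: "closed unit_square"
  unfolding unit_square_def by (intro closed_Collect_conj closed_Collect_le continuous_intros)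

lemma bounded_unit_square: "bounded unit_square"
  by (rule bounded_subset[OF bounded_cbox[of "(0, 0)" "(1, 1)"]])
    (auto simp: unit_square_def cbox_Pair_eq)

lemma tile_at_subset: "tile_at p Q \<subseteq> unit_square \<inter> {z. dominates p z}"
proof -
  have "closed (unit_square \<inter> {z. dominates p z})"
    unfolding dominates_def
    by (intro closed_Int closed_unit_square closed_Collect_conj closed_Collect_le continuous_intros)
  then show ?thesis
    unfolding tile_at_def by (rule closure_minimal[rotated]) (auto simp: free_region_def)
qed

lemma tile_at_memD:
  assumes "z \<in> tile_at p Q"
  shows "z \<in> unit_square" "dominates p z"
  using assms tile_at_subset[of p Q] by blast+

lemma compact_tile_at: "compact (tile_at p Q)"
  unfolding compact_eq_bounded_closed
  using bounded_subset[OF bounded_unit_square] tile_at_subset by (auto simp: tile_at_def)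

lemma tile_at_lmeasurable: "tile_at p Q \<in> lmeasurable"
  by (rule lmeasurable_compact[OF compact_tile_at])

lemma tile_at_down_closed:
  assumes "z \<in> tile_at p Q" "p \<in> unit_square" "dominates p w" "dominates w z"
  shows "w \<in> tile_at p Q"
proof -
  define \<phi> where "\<phi> v = (min (fst w) (fst v), min (snd w) (snd v))" for v :: pt
  have "\<phi> v \<in> free_region p Q" if "v \<in> free_region p Q" for v
    using that assms(2,3) by (auto simp: free_region_def \<phi>_def dominates_def unit_square_def)
  then have "\<phi> ` free_region p Q \<subseteq> free_region p Q"
    by blast
  moreover have "continuous_on UNIV \<phi>"
    unfolding \<phi>_def by (intro continuous_intros)
  ultimately have "\<phi> ` tile_at p Q \<subseteq> tile_at p Q"
    unfolding tile_at_def
    by (meson closed_closure closure_subset continuous_on_subset image_closure_subset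
        order_trans subset_UNIV)
  moreover have "\<phi> z = w"
    using assms(4) by (auto simp: \<phi>_def dominates_def)
  ultimately show ?thesis
    using assms(1) by blast
qed

lemma tile_at_not_northeast:
  assumes "z \<in> tile_at p Q" "q \<in> Q"
  shows "\<not> (fst q < fst z \<and> snd q < snd z)"
proof -
  have "open {z :: pt. fst q < fst z \<and> snd q < snd z}"
    by (intro open_Collect_conj open_Collect_less continuous_intros)
  moreover have "{z. fst q < fst z \<and> snd q < snd z} \<inter> free_region p Q = {}"
    using assms(2) by (auto simp: free_region_def dominates_def)
  ultimately show ?thesis
    using assms(1) open_Int_closure_eq_empty unfolding tile_at_def by blast
qed

lemma cbox_subset_tile_at:
  assumes "p \<in> unit_square" "fst p \<le> a" "a < b" "b \<le> 1" "snd p \<le> c" "c < d" "d \<le> 1"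
    and "\<forall>q\<in>Q. b \<le> fst q \<or> d \<le> snd q"
  shows "cbox (a, c) (b, d) \<subseteq> tile_at p Q"
proof -
  have "box (a, c) (b, d) \<subseteq> free_region p Q"
    using assms by (fastforce simp: box_Pair_eq free_region_def dominates_def unit_square_def)
  then have "closure (box (a, c) (b, d)) \<subseteq> tile_at p Q"
    unfolding tile_at_def by (rule closure_mono)
  moreover have "box (a, c) (b, d) \<noteq> {}"
    using assms(3,6) by (simp add: box_Pair_eq)
  ultimately show ?thesis
    by (metis closure_box)
qed

section \<open>Concave corners of a tile\<close>

lemma dist_le_sum_abs: "dist u v \<le> \<bar>fst u - fst v\<bar> + \<bar>snd u - snd v\<bar>" for u v :: pt
  using norm_Pair_le[of "fst u - fst v" "snd u - snd v"] by (cases u, cases v) (simp add: dist_norm)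

lemma concave_corner_in_closure:
  assumes "concave_corner t c"
  shows "c \<in> closure t"
proof -
  obtain \<epsilon> sx sy where \<epsilon>: "\<epsilon> > 0" and sx: "sx \<in> {-1, 1::real}" and sy: "sy \<in> {-1, 1::real}"
    and eq: "ball c \<epsilon> \<inter> interior t =
      ball c \<epsilon> - {z. 0 \<le> sx * (fst z - fst c) \<and> 0 \<le> sy * (snd z - snd c)}"
    using assms unfolding concave_corner_def by blast
  have "\<exists>y\<in>t. dist y c < e" if "e > 0" for e
  proof -
    define d where "d = min e \<epsilon> / 3"
    define y where "y = (fst c - sx * d, snd c - sy * d)"
    have "dist y c \<le> \<bar>sx * d\<bar> + \<bar>sy * d\<bar>"
      using dist_le_sum_abs[of y c] by (simp add: y_def)
    also have "\<dots> = 2 * d"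
      using sx sy \<open>e > 0\<close> \<epsilon> by (auto simp: d_def)
    moreover have "0 < min e \<epsilon>"
      using \<open>e > 0\<close> \<epsilon> by simp
    ultimately have "dist y c < min e \<epsilon>"
      unfolding d_def by linarith
    moreover have "sx * (fst y - fst c) < 0"
      using sx \<open>e > 0\<close> \<epsilon> by (auto simp: y_def d_def)
    ultimately have "y \<in> ball c \<epsilon> - {z. 0 \<le> sx * (fst z - fst c) \<and> 0 \<le> sy * (snd z - snd c)}"
      by (auto simp: dist_commute)
    then have "y \<in> interior t"
      using eq by blast
    then show ?thesis
      using interior_subset \<open>dist y c < min e \<epsilon>\<close> by force
  qed
  then show ?thesis
    by (simp add: closure_approachable)
qed

lemma interior_tile_at_not_northeast:
  assumes "z \<in> interior (tile_at p Q)" "q \<in> Q"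
  shows "\<not> (fst q \<le> fst z \<and> snd q \<le> snd z)"
proof
  assume z: "fst q \<le> fst z \<and> snd q \<le> snd z"
  obtain e where e: "e > 0" "ball z e \<subseteq> tile_at p Q"
    using assms(1) open_contains_ball[of "interior (tile_at p Q)"] interior_subset by blast
  define w where "w = (fst z + e / 3, snd z + e / 3)"
  have "dist z w < e"
    using dist_le_sum_abs[of z w] e(1) by (simp add: w_def)
  then have "w \<in> tile_at p Q"
    using e(2) by auto
  moreover have "fst q < fst w \<and> snd q < snd w"
    using z e(1) by (simp add: w_def)
  ultimately show False
    using tile_at_not_northeast assms(2) by blast
qed

lemma free_region_near_minimal_point:
  assumes "finite Q" "q \<in> Q" "p \<in> unit_square"
    and "fst p < fst q" "fst q < 1" "snd p < snd q" "snd q < 1"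
    and minimal: "\<forall>q'\<in>Q. dominates q' q \<longrightarrow> q' = q"
  obtains V where "open V" "q \<in> V" "V - {z. fst q \<le> fst z \<and> snd q \<le> snd z} \<subseteq> free_region p Q"
proof
  define V where "V = {z :: pt. fst p < fst z \<and> fst z < 1 \<and> snd p < snd z \<and> snd z < 1} \<inter>
    (\<Inter>q'\<in>Q - {q}. {z. fst z < fst q' \<or> snd z < snd q'})"
  have "open {z :: pt. fst z < fst q' \<or> snd z < snd q'}" for q' :: pt
    by (intro open_Collect_disj open_Collect_less continuous_intros)
  then show "open V"
    unfolding V_def using assms(1)
    by (intro open_Int open_INT open_Collect_conj open_Collect_less continuous_intros) auto
  show "q \<in> V"
    using assms(4-7) minimal unfolding V_def dominates_def by force
  show "V - {z. fst q \<le> fst z \<and> snd q \<le> snd z} \<subseteq> free_region p Q"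
  proof
    fix u assume u: "u \<in> V - {z. fst q \<le> fst z \<and> snd q \<le> snd z}"
    have "\<not> dominates q' u" if "q' \<in> Q" for q'
    proof (cases "q' = q")
      case False
      then have "fst u < fst q' \<or> snd u < snd q'"
        using u that unfolding V_def by blast
      then show ?thesis
        by (auto simp: dominates_def)
    qed (use u in \<open>auto simp: dominates_def\<close>)
    moreover have "fst p < fst u \<and> fst u < 1 \<and> snd p < snd u \<and> snd u < 1"
      using u unfolding V_def by blast
    ultimately show "u \<in> free_region p Q"
      using assms(3) by (auto simp: free_region_def dominates_def unit_square_def)
  qed
qed

lemma concave_corner_tile_at:
  assumes "finite Q" "q \<in> Q" "p \<in> unit_square"
    and "fst p < fst q" "fst q < 1" "snd p < snd q" "snd q < 1"
    and "\<forall>q'\<in>Q. dominates q' q \<longrightarrow> q' = q"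
  shows "concave_corner (tile_at p Q) q"
proof -
  let ?quadrant = "{z :: pt. fst q \<le> fst z \<and> snd q \<le> snd z}"
  obtain V where V: "open V" "q \<in> V" "V - ?quadrant \<subseteq> free_region p Q"
    using free_region_near_minimal_point[OF assms] by blast
  then obtain \<epsilon> where \<epsilon>: "\<epsilon> > 0" "ball q \<epsilon> \<subseteq> V"
    using open_contains_ball by blast
  have "ball q \<epsilon> \<inter> interior (tile_at p Q) \<subseteq> ball q \<epsilon> - ?quadrant"
    using interior_tile_at_not_northeast assms(2) by blast
  moreover have "V - ?quadrant \<subseteq> interior (tile_at p Q)"
  proof (rule interior_maximal)
    show "V - ?quadrant \<subseteq> tile_at p Q"
      using V(3) closure_subset unfolding tile_at_def by blast
    show "open (V - ?quadrant)"
      using V(1) by (intro open_Diff closed_Collect_conj closed_Collect_le continuous_intros)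
  qed
  ultimately have "ball q \<epsilon> \<inter> interior (tile_at p Q) =
      ball q \<epsilon> - {z. 0 \<le> 1 * (fst z - fst q) \<and> 0 \<le> 1 * (snd z - snd q)}"
    using \<epsilon>(2) by auto
  then show ?thesis
    unfolding concave_corner_def using \<epsilon>(1) by blast
qed

section \<open>The right tip\<close>

definition right_height :: "pt set \<Rightarrow> real \<Rightarrow> real" where
  "right_height Q x = Min (insert 1 (snd ` {q \<in> Q. fst q \<le> x}))"

lemma right_height_le:
  assumes "finite Q"
  shows "right_height Q x \<le> 1" "q \<in> Q \<Longrightarrow> fst q \<le> x \<Longrightarrow> right_height Q x \<le> snd q"
  using assms by (auto simp: right_height_def)

lemma finite_lex_min:
  fixes J :: "pt set"
  assumes "finite J" "J \<noteq> {}"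
  obtains q where "q \<in> J" "\<And>q'. q' \<in> J \<Longrightarrow> fst q \<le> fst q' \<and> (fst q' = fst q \<longrightarrow> snd q \<le> snd q')"
proof -
  define x where "x = Min (fst ` J)"
  define y where "y = Min (snd ` {q \<in> J. fst q = x})"
  have "x \<in> fst ` J"
    using assms by (simp add: x_def)
  then have "y \<in> snd ` {q \<in> J. fst q = x}"
    using assms(1) unfolding y_def by (intro Min_in) auto
  then have "(x, y) \<in> J"
    by auto
  then show ?thesis
    using assms(1) by (intro that[of "(x, y)"]) (auto simp: x_def y_def)
qed

lemma right_part_tile_at_subset_cbox:
  assumes "finite Q"
  shows "right_part (tile_at p Q) c \<subseteq> cbox (fst c, snd p) (1, right_height Q (fst c))"
proof
  fix z assume "z \<in> right_part (tile_at p Q) c"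
  then have z: "z \<in> tile_at p Q" "fst c < fst z"
    by (auto simp: right_part_def)
  have "snd z \<le> snd q" if "q \<in> Q" "fst q \<le> fst c" for q
    using tile_at_not_northeast[OF z(1) that(1)] that(2) z(2) by linarith
  moreover have "snd z \<le> 1"
    using tile_at_memD(1)[OF z(1)] by (simp add: unit_square_def)
  ultimately have "snd z \<le> right_height Q (fst c)"
    using assms by (auto simp: right_height_def)
  then show "z \<in> cbox (fst c, snd p) (1, right_height Q (fst c))"
    using tile_at_memD[OF z(1)] z(2)
    by (auto simp: cbox_Pair_eq mem_Times_iff dominates_def unit_square_def)
qed

lemma right_part_tile_at_area_pos:
  assumes "finite Q" "q \<in> Q" "area (right_part (tile_at p Q) q) \<noteq> 0"
  shows "fst q < 1" "snd p < snd q"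
proof -
  have "right_part (tile_at p Q) q \<subseteq> cbox (fst q, snd p) (1, snd q)"
    using right_part_tile_at_subset_cbox[OF assms(1), of p q] right_height_le(2)[OF assms(1,2)]
    by (fastforce simp: cbox_Pair_eq mem_Times_iff)
  then have "area (right_part (tile_at p Q) q) \<le> area (cbox (fst q, snd p) (1, snd q))"
    using right_part_lmeasurable[OF tile_at_lmeasurable] by (intro area_mono) (auto intro: fmeasurableD)
  then have "0 < area (cbox (fst q, snd p) (1, snd q))"
    using assms(3) area_nonneg[of "right_part (tile_at p Q) q"] by linarith
  then show "fst q < 1" "snd p < snd q"
    by (auto simp: area_cbox_Pair zero_less_mult_iff split: if_splits)
qed

lemma concave_corner_tile_at_lex_min:
  fixes p c :: pt and Q :: "pt set"
  defines "m \<equiv> right_height Q (fst c)"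
  assumes "finite Q" "p \<in> unit_square" "fst p \<le> fst c" "q1 \<in> Q" "fst c < fst q1" "fst q1 < 1"
    and "snd p < snd q1" "snd q1 < m"
    and lex_min: "\<And>q. q \<in> Q \<Longrightarrow> fst c < fst q \<Longrightarrow> snd q < m \<Longrightarrow>
      fst q1 \<le> fst q \<and> (fst q = fst q1 \<longrightarrow> snd q1 \<le> snd q)"
  shows "concave_corner (tile_at p Q) q1"
proof (rule concave_corner_tile_at[OF assms(2,5,3)])
  show "fst p < fst q1" "fst q1 < 1" "snd p < snd q1" "snd q1 < 1"
    using assms(4-9) right_height_le(1)[OF assms(2), of "fst c"] by (simp_all add: m_def)
  show "\<forall>q\<in>Q. dominates q q1 \<longrightarrow> q = q1"
  proof (intro ballI impI)
    fix q assume q: "q \<in> Q" "dominates q q1"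
    have "snd q < m"
      using q(2) assms(9) by (simp add: dominates_def)
    moreover have "fst c < fst q"
      using right_height_le(2)[OF assms(2) q(1), of "fst c"] calculation unfolding m_def
      by (meson not_le)
    ultimately have "fst q1 \<le> fst q \<and> (fst q = fst q1 \<longrightarrow> snd q1 \<le> snd q)"
      using lex_min[OF q(1)] by simp
    then show "q = q1"
      using q(2) by (auto simp: dominates_def prod_eq_iff)
  qed
qed

lemma right_part_tile_at_next_corner:
  fixes p c :: pt and Q :: "pt set"
  defines "T \<equiv> tile_at p Q" and "m \<equiv> right_height Q (fst c)"
  assumes "finite Q" "Q \<subseteq> unit_square" "p \<in> unit_square" "beta_tile \<beta> T" "0 < area T / \<beta>"
    and "fst p \<le> fst c" "q1 \<in> Q" "fst c < fst q1" "snd q1 < m"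
    and lex_min: "\<And>q. q \<in> Q \<Longrightarrow> fst c < fst q \<Longrightarrow> snd q < m \<Longrightarrow>
      fst q1 \<le> fst q \<and> (fst q = fst q1 \<longrightarrow> snd q1 \<le> snd q)"
  shows "area (right_part T c) < area T / \<beta> \<or>
    (concave_corner T q1 \<and> area (right_part T q1) < area (right_part T c) \<and>
     area (right_part T c) < area T / \<beta> + area (right_part T q1))"
proof -
  define R where "R = area T / \<beta>"
  have m_le: "m \<le> 1" "\<And>q. q \<in> Q \<Longrightarrow> fst q \<le> fst c \<Longrightarrow> m \<le> snd q"
    using right_height_le[OF assms(3)] by (auto simp: m_def)
  have below: "\<forall>q\<in>Q. fst q1 \<le> fst q \<or> m \<le> snd q"
    using m_le(2) lex_min by force
  have "fst q1 \<le> 1"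
    using assms(4,9) by (auto simp: unit_square_def)
  then have box_small: "area (cbox (fst c, snd p) (fst q1, m)) < R"
    using assms(5-8,10) m_le(1) below unfolding R_def T_def
    by (intro area_cbox_less_beta cbox_subset_tile_at) auto
  have "right_part T c \<subseteq> cbox (fst c, snd p) (fst q1, m) \<union> right_part T q1"
    using right_part_tile_at_subset_cbox[OF assms(3), of p c]
    by (fastforce simp: T_def m_def cbox_Pair_eq mem_Times_iff right_part_def)
  then have cover: "area (right_part T c) \<le> area (cbox (fst c, snd p) (fst q1, m)) + area (right_part T q1)"
    using right_part_lmeasurable[OF tile_at_lmeasurable, of p Q] unfolding T_def
    by (meson area_Un_le area_mono fmeasurableD fmeasurable.Un lmeasurable_cbox order_trans)
  show ?thesis
  proof (cases "area (right_part T q1) = 0")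
    case True
    then show ?thesis
      using cover box_small by (simp add: R_def)
  next
    case False
    then have "fst q1 < 1" "snd p < snd q1"
      using right_part_tile_at_area_pos[OF assms(3,9)] by (simp_all add: T_def)
    then have "concave_corner T q1"
      unfolding T_def using assms(3,5,8-11) lex_min
      by (intro concave_corner_tile_at_lex_min) (simp_all add: m_def)
    moreover have "area (right_part T q1) + (fst q1 - fst c) * (m - snd p) \<le> area (right_part T c)"
    proof -
      have "cbox (fst c, snd p) (fst q1, m) \<subseteq> T"
        using assms(5,8,10,11) m_le(1) below \<open>snd p < snd q1\<close> \<open>fst q1 \<le> 1\<close> unfolding T_def
        by (intro cbox_subset_tile_at) auto
      then show ?thesis
        using area_right_part_add_box_le[OF tile_at_lmeasurable, of c "snd p" q1 m p Q]
          box_subset_cbox assms(10,11) \<open>snd p < snd q1\<close>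
        by (auto simp: T_def)
    qed
    moreover have "0 < (fst q1 - fst c) * (m - snd p)"
      using assms(10,11) \<open>snd p < snd q1\<close> by simp
    ultimately show ?thesis
      using cover box_small by (simp add: R_def)
  qed
qed

lemma right_part_tile_at_small_or_next_corner:
  fixes p :: pt and Q :: "pt set"
  defines "T \<equiv> tile_at p Q"
  assumes "finite Q" "Q \<subseteq> unit_square" "p \<in> unit_square"
    and "beta_tile \<beta> T" "0 < area T / \<beta>" "c \<in> T"
  shows "area (right_part T c) < area T / \<beta> \<or>
    (\<exists>c'. concave_corner T c' \<and> area (right_part T c') < area (right_part T c) \<and>
          area (right_part T c) < area T / \<beta> + area (right_part T c'))"
proof -
  define m where "m = right_height Q (fst c)"
  \<comment> \<open>The earlier points cutting into the tile right of c; the next concave corner is the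
    lexicographically least of them.\<close>
  define J where "J = {q \<in> Q. fst c < fst q \<and> snd q < m}"
  have pc: "fst p \<le> fst c"
    using tile_at_memD(2)[of c p Q] assms(7) by (simp add: T_def dominates_def)
  show ?thesis
  proof (cases "J = {}")
    case True
    then have "\<forall>q\<in>Q. 1 \<le> fst q \<or> m \<le> snd q"
      using right_height_le(2)[OF assms(2)] unfolding J_def m_def
      by (metis (mono_tags, lifting) empty_iff mem_Collect_eq not_le)
    then have "area (cbox (fst c, snd p) (1, m)) < area T / \<beta>"
      using assms(4-6) pc right_height_le(1)[OF assms(2)] unfolding T_def m_def
      by (intro area_cbox_less_beta cbox_subset_tile_at) auto
    moreover have "area (right_part T c) \<le> area (cbox (fst c, snd p) (1, m))"
      using right_part_tile_at_subset_cbox[OF assms(2)] right_part_lmeasurable[OF tile_at_lmeasurable]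
      unfolding T_def m_def by (intro area_mono) (auto intro: fmeasurableD)
    ultimately show ?thesis
      by simp
  next
    case False
    then obtain q1 where "q1 \<in> J"
      and "\<And>q. q \<in> J \<Longrightarrow> fst q1 \<le> fst q \<and> (fst q = fst q1 \<longrightarrow> snd q1 \<le> snd q)"
      using finite_lex_min[of J] assms(2) by (auto simp: J_def)
    then have "area (right_part T c) < area T / \<beta> \<or>
      (concave_corner T q1 \<and> area (right_part T q1) < area (right_part T c) \<and>
       area (right_part T c) < area T / \<beta> + area (right_part T q1))"
      using assms(2-6) pc unfolding T_def
      by (intro right_part_tile_at_next_corner) (auto simp: J_def m_def)
    then show ?thesis
      by blast
  qed
qed

lemma right_tip_area_less:
  fixes p :: pt and Q :: "pt set"
  defines "T \<equiv> tile_at p Q"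
  assumes "finite Q" "Q \<subseteq> unit_square" "p \<in> unit_square" "beta_tile \<beta> T" "0 < area T / \<beta>"
    and "0 \<le> \<alpha>" "right_tip \<alpha> \<beta> T TR"
  shows "area TR < (\<alpha> + 1) * (area T / \<beta>)"
proof (rule ccontr)
  define R where "R = area T / \<beta>"
  assume "\<not> ?thesis"
  then have big: "\<alpha> * R + R \<le> area TR"
    unfolding R_def[symmetric] by (simp add: distrib_right)
  have "\<alpha> / \<beta> * area T = \<alpha> * R"
    by (simp add: R_def)
  then obtain c where c: "concave_corner T c" "TR = right_part T c"
    and least: "\<And>c'. concave_corner T c' \<Longrightarrow> \<alpha> * R \<le> area (right_part T c') \<Longrightarrow>
      area TR \<le> area (right_part T c')"
    using assms(8) unfolding right_tip_def by auto
  have "c \<in> T"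
    using concave_corner_in_closure[OF c(1)] by (simp add: T_def tile_at_def)
  moreover have "0 \<le> \<alpha> * R"
    using mult_nonneg_nonneg[OF assms(7) less_imp_le[OF assms(6)]] by (simp add: R_def)
  ultimately obtain c' where c': "concave_corner T c'" "area (right_part T c') < area TR"
    "area TR < R + area (right_part T c')"
    using right_part_tile_at_small_or_next_corner[of Q p \<beta> c] assms(2-6) big c(2)
    unfolding T_def R_def by force
  then show False
    using least[OF c'(1)] big by linarith
qed

section \<open>Reflection in the diagonal\<close>

lemma swap_in_unit_square_iff [simp]: "prod.swap z \<in> unit_square \<longleftrightarrow> z \<in> unit_square"
  by (auto simp: unit_square_def)

lemma in_swap_image_iff: "z \<in> prod.swap ` A \<longleftrightarrow> prod.swap z \<in> A"
  by (cases z) simp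

lemma dist_swap: "dist (prod.swap u) (prod.swap v) = dist u v" for u v :: pt
  by (cases u, cases v) (simp add: dist_Pair_Pair add.commute)

lemma linear_swap: "linear (prod.swap :: pt \<Rightarrow> pt)"
  by (auto simp: linear_iff)

lemma area_swap:
  assumes "S \<in> sets borel"
  shows "area (prod.swap ` S) = area S"
proof -
  have S: "S \<in> sets (lborel \<Otimes>\<^sub>M lborel)"
    using assms by (simp only: lborel_prod sets_lborel)
  have swap_eq: "prod.swap ` S = (\<lambda>(x, y). (y, x)) -` S \<inter> space (lborel \<Otimes>\<^sub>M lborel :: pt measure)"
    by (auto simp: space_pair_measure in_swap_image_iff)
  have "prod.swap ` S \<in> sets (lborel \<Otimes>\<^sub>M lborel)"
    unfolding swap_eq using measurable_pair_swap' S by (rule measurable_sets)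
  then have swap_borel: "prod.swap ` S \<in> sets borel"
    by (simp only: lborel_prod sets_lborel)
  have "emeasure (lborel \<Otimes>\<^sub>M lborel) S = emeasure (lborel \<Otimes>\<^sub>M lborel) (prod.swap ` S)"
    unfolding swap_eq
    by (subst lborel_pair.distr_pair_swap) (simp add: emeasure_distr[OF measurable_pair_swap' S])
  then show ?thesis
    using assms swap_borel by (simp add: area_def measure_def lborel_prod)
qed

lemma swap_tile_at: "prod.swap ` tile_at p Q = tile_at (prod.swap p) (prod.swap ` Q)"
proof -
  have "prod.swap ` free_region p Q = free_region (prod.swap p) (prod.swap ` Q)"
    by (auto simp: in_swap_image_iff free_region_def dominates_def unit_square_def)
  then show ?thesis
    unfolding tile_at_def by (simp add: closure_injective_linear_image linear_swap)
qed

lemma concave_corner_swap: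
  assumes "concave_corner t c"
  shows "concave_corner (prod.swap ` t) (prod.swap c)"
proof -
  obtain \<epsilon> sx sy where \<epsilon>: "\<epsilon> > 0" and s: "sx \<in> {-1, 1::real}" "sy \<in> {-1, 1::real}"
    and eq: "ball c \<epsilon> \<inter> interior t =
      ball c \<epsilon> - {z. 0 \<le> sx * (fst z - fst c) \<and> 0 \<le> sy * (snd z - snd c)}"
    using assms unfolding concave_corner_def by blast
  have "ball (prod.swap c) \<epsilon> = prod.swap ` ball c \<epsilon>"
    by (metis dist_swap in_swap_image_iff mem_ball subsetI subset_antisym swap_swap)
  moreover have "interior (prod.swap ` t) = prod.swap ` interior t"
    by (simp add: interior_injective_linear_image linear_swap)
  ultimately have "ball (prod.swap c) \<epsilon> \<inter> interior (prod.swap ` t) =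
      prod.swap ` (ball c \<epsilon> \<inter> interior t)"
    by (simp add: image_Int)
  also have "\<dots> = ball (prod.swap c) \<epsilon> -
      {z. 0 \<le> sy * (fst z - fst (prod.swap c)) \<and> 0 \<le> sx * (snd z - snd (prod.swap c))}"
    unfolding eq \<open>ball (prod.swap c) \<epsilon> = _\<close> by (auto simp: in_swap_image_iff)
  finally show ?thesis
    unfolding concave_corner_def using \<epsilon> s by blast
qed

lemma beta_tile_swap:
  assumes "beta_tile \<beta> t" "t \<in> sets borel"
  shows "beta_tile \<beta> (prod.swap ` t)"
  unfolding beta_tile_def area_swap[OF assms(2)]
proof (intro allI impI)
  fix a b c d :: real
  assume "a \<le> b \<and> c \<le> d \<and> {a..b} \<times> {c..d} \<subseteq> prod.swap ` t"
  then have "c \<le> d \<and> a \<le> b \<and> {c..d} \<times> {a..b} \<subseteq> t"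
    by (auto simp: in_swap_image_iff subset_iff)
  then show "(b - a) * (d - c) < area t / \<beta>"
    using assms(1) unfolding beta_tile_def by (metis mult.commute)
qed

lemma right_part_swap: "right_part (prod.swap ` t) c = prod.swap ` upper_part t (prod.swap c)"
  by (auto simp: right_part_def upper_part_def in_swap_image_iff)

lemma right_tip_swap:
  assumes "upper_tip \<alpha> \<beta> t T" "closed t"
  shows "right_tip \<alpha> \<beta> (prod.swap ` t) (prod.swap ` T)"
proof -
  have area_up: "area (right_part (prod.swap ` t) c) = area (upper_part t (prod.swap c))" for c
    using upper_part_borel[OF borel_closed[OF assms(2)]] by (simp add: right_part_swap area_swap)
  have corner: "concave_corner (prod.swap ` t) c \<longleftrightarrow> concave_corner t (prod.swap c)" for c
    using concave_corner_swap[of t "prod.swap c"] concave_corner_swap[of "prod.swap ` t" c]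
    by (auto simp: image_image)
  obtain c where c: "concave_corner t c" "T = upper_part t c" "\<alpha> / \<beta> * area t \<le> area T"
    and least: "\<And>c'. concave_corner t c' \<Longrightarrow> \<alpha> / \<beta> * area t \<le> area (upper_part t c') \<Longrightarrow>
      area T \<le> area (upper_part t c')"
    using assms(1) unfolding upper_tip_def by blast
  have T_swap: "prod.swap ` T = right_part (prod.swap ` t) (prod.swap c)"
    by (simp add: c(2) right_part_swap)
  have area_T: "area (prod.swap ` T) = area T"
    using area_up[of "prod.swap c"] unfolding T_swap by (simp add: c(2))
  have area_t: "area (prod.swap ` t) = area t"
    using assms(2) by (simp add: area_swap borel_closed)
  show ?thesis
    unfolding right_tip_def
  proof (intro exI conjI allI impI)
    show "concave_corner (prod.swap ` t) (prod.swap c)"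
      using c(1) by (rule concave_corner_swap)
    show "prod.swap ` T = right_part (prod.swap ` t) (prod.swap c)"
      by (rule T_swap)
    show "\<alpha> / \<beta> * area (prod.swap ` t) \<le> area (prod.swap ` T)"
      using c(3) area_t area_T by simp
  next
    fix c' assume "concave_corner (prod.swap ` t) c' \<and>
      \<alpha> / \<beta> * area (prod.swap ` t) \<le> area (right_part (prod.swap ` t) c')"
    then show "area (prod.swap ` T) \<le> area (right_part (prod.swap ` t) c')"
      using least[of "prod.swap c'"] corner[of c'] area_t area_T area_up[of c'] by simp
  qed
qed

lemma upper_tip_area_less:
  fixes p :: pt and Q :: "pt set"
  defines "T \<equiv> tile_at p Q"
  assumes "finite Q" "Q \<subseteq> unit_square" "p \<in> unit_square" "beta_tile \<beta> T" "0 < area T / \<beta>"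
    and "0 \<le> \<alpha>" "upper_tip \<alpha> \<beta> T TU"
  shows "area TU < (\<alpha> + 1) * (area T / \<beta>)"
proof -
  have "closed T"
    by (simp add: T_def tile_at_def)
  then have T_borel: "T \<in> sets borel"
    by (rule borel_closed)
  obtain c where "TU = upper_part T c"
    using assms(8) unfolding upper_tip_def by blast
  then have TU_borel: "TU \<in> sets borel"
    using upper_part_borel[OF T_borel] by simp
  have "area (prod.swap ` TU) < (\<alpha> + 1) * (area (prod.swap ` T) / \<beta>)"
    unfolding T_def swap_tile_at
  proof (rule right_tip_area_less)
    show "finite (prod.swap ` Q)" "prod.swap p \<in> unit_square"
      using assms(2,4) by auto
    show "prod.swap ` Q \<subseteq> unit_square"
      using assms(3) swap_in_unit_square_iff by blast
    show "beta_tile \<beta> (tile_at (prod.swap p) (prod.swap ` Q))"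
      using beta_tile_swap[OF assms(5) T_borel] by (simp add: T_def swap_tile_at)
    show "0 < area (tile_at (prod.swap p) (prod.swap ` Q)) / \<beta>"
      using assms(6) area_swap[OF T_borel] by (simp add: T_def swap_tile_at)
    show "right_tip \<alpha> \<beta> (tile_at (prod.swap p) (prod.swap ` Q)) (prod.swap ` TU)"
      using right_tip_swap[OF assms(8) \<open>closed T\<close>] by (simp add: T_def swap_tile_at)
  qed (rule assms(7))
  then show ?thesis
    using area_swap[OF T_borel] area_swap[OF TU_borel] by simp
qed

lemma par_B_eq_swap_par_A: "par_B lam p b = prod.swap ` par_A lam (prod.swap p) b"
  unfolding par_A_def par_B_def by (simp add: convex_hull_linear_image linear_swap)

section \<open>The region under a hyperbola\<close>

lemma has_integral_inverse_shift:
  fixes y0 c d R :: real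
  assumes "y0 < c" "c \<le> d"
  shows "((\<lambda>y. R / (y - y0)) has_integral (R * ln (d - y0) - R * ln (c - y0))) {c..d}"
proof -
  have "((\<lambda>y. R * ln (y - y0)) has_real_derivative R / (y - y0)) (at y within {c..d})"
    if "y \<in> {c..d}" for y
    using that assms by (auto intro!: derivative_eq_intros simp: field_simps)
  then show ?thesis
    using fundamental_theorem_of_calculus[OF assms(2), of "\<lambda>y. R * ln (y - y0)"]
    by (simp add: has_real_derivative_iff_has_vector_derivative)
qed

definition hyperbolic_region :: "pt \<Rightarrow> real \<Rightarrow> real \<Rightarrow> real \<Rightarrow> pt set" where
  "hyperbolic_region p a b R = {z. dominates p z \<and> fst z \<le> fst p + a \<and> snd z \<le> snd p + b \<and>
     (fst z - fst p) * (snd z - snd p) \<le> R}"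

lemma hyperbolic_region_subset_cbox: "hyperbolic_region p a b R \<subseteq> cbox p (fst p + a, snd p + b)"
  by (cases p) (auto simp: hyperbolic_region_def dominates_def cbox_Pair_eq)

lemma compact_hyperbolic_region: "compact (hyperbolic_region p a b R)"
proof -
  have "closed (hyperbolic_region p a b R)"
    unfolding hyperbolic_region_def dominates_def
    by (intro closed_Collect_conj closed_Collect_le continuous_intros)
  moreover have "bounded (hyperbolic_region p a b R)"
    using hyperbolic_region_subset_cbox[of p a b R] by (rule bounded_subset[OF bounded_cbox])
  ultimately show ?thesis
    by (simp add: compact_eq_bounded_closed)
qed

lemma has_integral_hyperbolic_profile:
  fixes y0 a b R :: real
  defines "g \<equiv> \<lambda>y. if y \<le> y0 + R / a then a else R / (y - y0)"
  assumes "0 < R" "0 < a" "R < a * b"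
  shows "(g has_integral R * (1 + ln (a * b / R))) {y0..y0 + b}"
proof -
  define c where "c = y0 + R / a"
  have "0 < b"
    using assms(2-4) zero_less_mult_pos[of a b] by simp
  have "y0 < c" "c \<le> y0 + b"
    using assms(2-4) by (simp_all add: c_def field_simps)
  have "((\<lambda>y. a) has_integral R) {y0..c}"
    using has_integral_const_real[of a y0 c] \<open>y0 < c\<close> assms(3) by (simp add: c_def)
  then have "(g has_integral R) {y0..c}"
    by (rule has_integral_eq[rotated]) (simp add: g_def c_def)
  moreover have "(g has_integral R * ln (a * b / R)) {c..y0 + b}"
  proof -
    have "R * ln (y0 + b - y0) - R * ln (c - y0) = R * ln (a * b / R)"
      using assms(2,3) \<open>0 < b\<close> by (simp add: c_def ln_div ln_mult algebra_simps)
    then have "((\<lambda>y. R / (y - y0)) has_integral R * ln (a * b / R)) {c..y0 + b}"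
      using has_integral_inverse_shift[OF \<open>y0 < c\<close> \<open>c \<le> y0 + b\<close>, of R] by simp
    then show ?thesis
      by (rule has_integral_eq[rotated]) (use assms(2,3) in \<open>auto simp: g_def c_def\<close>)
  qed
  ultimately have "(g has_integral R + R * ln (a * b / R)) {y0..y0 + b}"
    using \<open>y0 < c\<close> \<open>c \<le> y0 + b\<close> by (intro has_integral_combine) auto
  then show ?thesis
    by (simp add: distrib_left)
qed

lemma area_hyperbolic_region_le_log:
  assumes "0 < R" "0 \<le> a" "0 \<le> b" "R < a * b"
  shows "area (hyperbolic_region p a b R) \<le> R * (1 + ln (a * b / R))"
proof -
  have "0 < a" "0 < R / a"
    using assms by (auto simp: less_le)
  define x0 y0 where "x0 = fst p" and "y0 = snd p"
  define g where "g = (\<lambda>y. if y \<le> y0 + R / a then a else R / (y - y0))"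
  have "(g has_integral R * (1 + ln (a * b / R))) {y0..y0 + b}"
    unfolding g_def using assms(1) \<open>0 < a\<close> assms(4) by (rule has_integral_hyperbolic_profile)
  then show ?thesis
  proof (rule area_le_of_horizontal_slices)
    show "hyperbolic_region p a b R \<in> sets borel"
      using compact_hyperbolic_region by (rule borel_compact)
    show "0 \<le> g y" for y
    proof (cases "y \<le> y0 + R / a")
      case False
      then have "y0 < y"
        using \<open>0 < R / a\<close> by linarith
      then show ?thesis
        using False assms(1) by (simp add: g_def)
    qed (use \<open>0 < a\<close> in \<open>simp add: g_def\<close>)
    show "\<exists>l. (\<lambda>x. (x, y)) -` hyperbolic_region p a b R \<subseteq> {l..l + g y}" for y
    proof (intro exI subsetI)
      fix x assume "x \<in> (\<lambda>x. (x, y)) -` hyperbolic_region p a b R"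
      then have x: "x0 \<le> x" "x \<le> x0 + a" "(x - x0) * (y - y0) \<le> R"
        by (auto simp: hyperbolic_region_def dominates_def x0_def y0_def)
      have "x - x0 \<le> R / (y - y0)" if "y0 + R / a < y"
      proof -
        have "y0 < y"
          using that \<open>0 < R / a\<close> by linarith
        then show ?thesis
          using x(3) by (simp add: field_simps)
      qed
      then show "x \<in> {x0..x0 + g y}"
        using x by (auto simp: g_def)
    qed
    show "(\<lambda>x. (x, y)) -` hyperbolic_region p a b R = {}" if "y \<notin> {y0..y0 + b}" for y
      using that by (auto simp: hyperbolic_region_def dominates_def y0_def)
  qed
qed

lemma area_hyperbolic_region_le:
  assumes "0 < R" "0 \<le> a" "0 \<le> b" "0 \<le> K" "a * b \<le> R * exp K"
  shows "area (hyperbolic_region p a b R) \<le> R * (K + 1)"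
proof (cases "a * b \<le> R")
  case True
  have "area (hyperbolic_region p a b R) \<le> area (cbox p (fst p + a, snd p + b))"
    using hyperbolic_region_subset_cbox[of p a b R] compact_hyperbolic_region[of p a b R]
    by (intro area_mono) (auto intro: fmeasurableD lmeasurable_compact)
  also have "\<dots> = a * b"
    using assms(2,3) area_cbox_Pair[of "fst p" "snd p"] by simp
  also have "\<dots> \<le> R * (K + 1)"
    using True assms(1,4) by (smt (verit) mult_le_cancel_left1)
  finally show ?thesis .
next
  case False
  have "a * b / R \<le> exp K" "0 < a * b / R"
    using False assms by (auto simp: field_simps)
  then have "ln (a * b / R) \<le> K"
    by (metis ln_exp ln_le_cancel_iff exp_gt_zero)
  then have "R * (1 + ln (a * b / R)) \<le> R * (K + 1)"
    using assms(1) by simp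
  then show ?thesis
    using area_hyperbolic_region_le_log[OF assms(1-3), of p] False by linarith
qed

section \<open>The parallelograms\<close>

lemma bilinear_comb_in_convex_hull:
  fixes v0 v1 v2 v3 :: pt
  assumes "0 \<le> s" "s \<le> 1" "0 \<le> u" "u \<le> 1"
  shows "(1 - u) *\<^sub>R ((1 - s) *\<^sub>R v0 + s *\<^sub>R v1) + u *\<^sub>R ((1 - s) *\<^sub>R v3 + s *\<^sub>R v2)
           \<in> convex hull {v0, v1, v2, v3}"
proof -
  let ?K = "convex hull {v0, v1, v2, v3}"
  have K: "convex ?K" "v0 \<in> ?K" "v1 \<in> ?K" "v2 \<in> ?K" "v3 \<in> ?K"
    by (simp_all add: hull_inc)
  have "(1 - s) *\<^sub>R v0 + s *\<^sub>R v1 \<in> ?K" "(1 - s) *\<^sub>R v3 + s *\<^sub>R v2 \<in> ?K"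
    using assms by (intro convexD[OF K(1)] K; simp)+
  then show ?thesis
    using convexD[OF K(1), of _ _ "1 - u" u] assms by simp
qed

lemma area_par_A_ge:
  assumes "0 < lam" "0 \<le> a"
  shows "lam * a\<^sup>2 \<le> area (par_A lam p a)"
proof (cases "a = 0")
  case True
  then show ?thesis
    by (simp add: area_nonneg)
next
  case False
  then have "0 < a"
    using assms(2) by simp
  define P where "P = {z :: pt. snd p - lam * a \<le> snd z \<and> snd z \<le> snd p \<and>
    fst p + (snd p - snd z) \<le> fst z \<and> fst z \<le> fst p + a + (snd p - snd z)}"
  have "P \<subseteq> par_A lam p a"
  proof
    fix z assume z: "z \<in> P"
    define u where "u = (snd p - snd z) / (lam * a)"
    define s where "s = (fst z - fst p - (snd p - snd z)) / a"
    have "0 \<le> s" "s \<le> 1" "0 \<le> u" "u \<le> 1"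
      using z assms(1) \<open>0 < a\<close> by (auto simp: u_def s_def P_def field_simps)
    moreover have "z = (1 - u) *\<^sub>R ((1 - s) *\<^sub>R p + s *\<^sub>R (fst p + a, snd p)) +
        u *\<^sub>R ((1 - s) *\<^sub>R (fst p + lam * a, snd p - lam * a) +
               s *\<^sub>R (fst p + (1 + lam) * a, snd p - lam * a))"
      using assms(1) \<open>0 < a\<close> by (simp add: prod_eq_iff u_def s_def field_simps)
    ultimately show "z \<in> par_A lam p a"
      unfolding par_A_def by (metis bilinear_comb_in_convex_hull)
  qed
  moreover have P_borel: "P \<in> sets borel"
    unfolding P_def by (intro borel_closed closed_Collect_conj closed_Collect_le continuous_intros)
  moreover have "par_A lam p a \<in> lmeasurable"
    unfolding par_A_def by (intro lmeasurable_compact compact_convex_hull finite_imp_compact) simp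
  ultimately have "area P \<le> area (par_A lam p a)"
    by (intro area_mono) auto
  moreover have "area P = a * (snd p - (snd p - lam * a))"
    by (rule area_eq_of_horizontal_slices[OF P_borel, where l = "\<lambda>y. fst p + (snd p - y)"])
      (use assms(1) \<open>0 < a\<close> in \<open>auto simp: P_def\<close>)
  ultimately show ?thesis
    by (simp add: power2_eq_square mult_ac)
qed

lemma area_par_B_ge:
  assumes "0 < lam" "0 \<le> b"
  shows "lam * b\<^sup>2 \<le> area (par_B lam p b)"
proof -
  have "compact (par_A lam (prod.swap p) b)"
    unfolding par_A_def by (intro compact_convex_hull finite_imp_compact) simp
  then show ?thesis
    using area_par_A_ge[OF assms, of "prod.swap p"]
    by (simp add: par_B_eq_swap_par_A area_swap borel_compact)
qed

section \<open>The main body\<close>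

lemma main_body_subset_hyperbolic_region:
  fixes p :: pt and Q :: "pt set"
  defines "T \<equiv> tile_at p Q"
  assumes "p \<in> unit_square" "beta_tile \<beta> T" "cR \<in> T" "cU \<in> T"
    and M: "M = T - right_part T cR - upper_part T cU"
  shows "M \<subseteq> hyperbolic_region p (bottom_len p M) (left_len p M) (area T / \<beta>)"
proof
  have M_eq: "M = T \<inter> {z. fst z \<le> fst cR} \<inter> {z. snd z \<le> snd cU}"
    by (auto simp: M right_part_def upper_part_def)
  have "compact M"
    unfolding M_eq T_def
    by (intro compact_Int_closed compact_tile_at closed_Collect_le continuous_intros)
  have p_le: "dominates p cR" "dominates p cU"
    using tile_at_memD(2) assms(4,5) by (auto simp: T_def)
  fix z assume "z \<in> M"
  then have z: "z \<in> T" "fst z \<le> fst cR" "snd z \<le> snd cU"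
    by (auto simp: M_eq)
  have pz: "dominates p z"
    using tile_at_memD(2) z(1) by (simp add: T_def)
  have rect: "{fst p..fst z} \<times> {snd p..snd z} \<subseteq> T"
    using tile_at_down_closed[OF z(1)[unfolded T_def] assms(2)] pz
    by (auto simp: T_def dominates_def mem_Times_iff)
  then have "(fst z - fst p) * (snd z - snd p) < area T / \<beta>"
    using assms(3) pz unfolding beta_tile_def dominates_def by blast
  moreover have "fst z - fst p \<le> bottom_len p M"
    using rect z p_le pz \<open>compact M\<close>
    by (intro le_bottom_len) (auto simp: M_eq mem_Times_iff dominates_def subset_iff)
  moreover have "snd z - snd p \<le> left_len p M"
    using rect z p_le pz \<open>compact M\<close>
    by (intro le_left_len) (auto simp: M_eq mem_Times_iff dominates_def subset_iff)
  ultimately show "z \<in> hyperbolic_region p (bottom_len p M) (left_len p M) (area T / \<beta>)"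
    using pz by (simp add: hyperbolic_region_def)
qed

lemma main_body_sides_product_gt:
  fixes p :: pt and Q :: "pt set"
  defines "T \<equiv> tile_at p Q"
  assumes "p \<in> unit_square" "beta_tile \<beta> T" "0 < area T / \<beta>" "0 \<le> K" "cR \<in> T" "cU \<in> T"
    and "M = T - right_part T cR - upper_part T cU" and "area T / \<beta> * (K + 1) < area M"
  shows "area T / \<beta> * exp K < bottom_len p M * left_len p M"
proof (rule ccontr)
  let ?H = "hyperbolic_region p (bottom_len p M) (left_len p M) (area T / \<beta>)"
  assume "\<not> ?thesis"
  then have "area ?H \<le> area T / \<beta> * (K + 1)"
    using assms(4,5) by (intro area_hyperbolic_region_le) (auto simp: bottom_len_def left_len_def)
  moreover have "area M \<le> area ?H"
  proof (rule area_mono)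
    show "M \<subseteq> ?H"
      using main_body_subset_hyperbolic_region assms(2,3,6-8) unfolding T_def by blast
    have "M \<in> lmeasurable"
      unfolding assms(8) T_def
      by (intro fmeasurable_Diff fmeasurableD right_part_lmeasurable upper_part_lmeasurable
          tile_at_lmeasurable)
    then show "M \<in> sets lebesgue"
      by (rule fmeasurableD)
  qed (intro lmeasurable_compact compact_hyperbolic_region)
  ultimately show False
    using assms(9) by linarith
qed

lemma le_parallelogram_areas:
  assumes "0 < lam" "0 < \<beta>" "0 \<le> a" "0 \<le> b" "A / \<beta> * exp K < a * b"
  shows "A \<le> \<beta> / (2 * lam * exp K) * (area (par_A lam p a) + area (par_B lam p b))"
proof -
  have "2 * lam * (a * b) \<le> lam * a\<^sup>2 + lam * b\<^sup>2"
    using mult_nonneg_nonneg[OF less_imp_le[OF assms(1)] zero_le_power2[of "a - b"]]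
    by (simp add: power2_eq_square algebra_simps)
  also have "\<dots> \<le> area (par_A lam p a) + area (par_B lam p b)"
    using area_par_A_ge[OF assms(1,3)] area_par_B_ge[OF assms(1,4)] by (rule add_mono)
  finally have "2 * lam * (A / \<beta> * exp K) < area (par_A lam p a) + area (par_B lam p b)"
    using assms(1,5) by (meson less_le_trans mult_strict_left_mono zero_less_mult_iff zero_less_numeral)
  then have "\<beta> / (2 * lam * exp K) * (2 * lam * (A / \<beta> * exp K)) \<le>
      \<beta> / (2 * lam * exp K) * (area (par_A lam p a) + area (par_B lam p b))"
    using assms(1,2) by (intro mult_left_mono) auto
  moreover have "\<beta> / (2 * lam * exp K) * (2 * lam * (A / \<beta> * exp K)) = A"
    using assms(1,2) by simp
  ultimately show ?thesis
    by simp
qed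

lemma area_beta_tile_at_le:
  fixes \<alpha> \<beta> lam :: real and p :: pt and Q TR TU :: "pt set"
  defines "T \<equiv> tile_at p Q" and "M \<equiv> tile_at p Q - TR - TU" and "K \<equiv> \<beta> - 3 - 2 * \<alpha>"
  assumes "\<beta> \<ge> 3 + 2 * \<alpha>" "0 < lam" "lam < \<alpha>"
    and "finite Q" "Q \<subseteq> unit_square" "p \<in> unit_square"
    and "beta_tile \<beta> T" "right_tip \<alpha> \<beta> T TR" "upper_tip \<alpha> \<beta> T TU"
  shows "area T \<le> \<beta> / (2 * lam * exp K) *
    (area (par_A lam p (bottom_len p M)) + area (par_B lam p (left_len p M)))"
proof -
  define R where "R = area T / \<beta>"
  have "0 < \<beta>" "0 \<le> \<alpha>" "0 \<le> K"
    using assms(4-6) by (simp_all add: K_def)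
  obtain cR cU where cR: "concave_corner T cR" "TR = right_part T cR"
    and cU: "concave_corner T cU" "TU = upper_part T cU"
    using assms(11,12) unfolding right_tip_def upper_tip_def by blast
  have "cR \<in> T" "cU \<in> T"
    using concave_corner_in_closure[OF cR(1)] concave_corner_in_closure[OF cU(1)]
    by (simp_all add: T_def tile_at_def)
  then have "0 < R"
    using beta_tile_area_pos[OF assms(10)] by (simp add: R_def)
  have "area TR < (\<alpha> + 1) * R" "area TU < (\<alpha> + 1) * R"
    using right_tip_area_less[OF assms(7-9) assms(10)[unfolded T_def] _ \<open>0 \<le> \<alpha>\<close>
        assms(11)[unfolded T_def]]
      upper_tip_area_less[OF assms(7-9) assms(10)[unfolded T_def] _ \<open>0 \<le> \<alpha>\<close>
        assms(12)[unfolded T_def]]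
      \<open>0 < R\<close>
    by (simp_all add: R_def T_def)
  moreover have "area T \<le> area M + area TR + area TU"
    unfolding M_def T_def cR(2) cU(2)
    by (intro area_le_Diff_add tile_at_lmeasurable right_part_lmeasurable upper_part_lmeasurable)
  moreover have "area T = (K + 3 + 2 * \<alpha>) * R"
    using \<open>0 < \<beta>\<close> by (simp add: R_def K_def)
  ultimately have "R * (K + 1) < area M"
    by (simp add: algebra_simps)
  moreover have "M = T - right_part T cR - upper_part T cU"
    by (simp add: M_def T_def cR(2) cU(2))
  ultimately have "R * exp K < bottom_len p M * left_len p M"
    using main_body_sides_product_gt[OF assms(9) assms(10)[unfolded T_def] _ \<open>0 \<le> K\<close>]
      \<open>0 < R\<close> \<open>cR \<in> T\<close> \<open>cU \<in> T\<close>
    by (simp add: R_def T_def)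
  then show ?thesis
    by (intro le_parallelogram_areas[OF assms(5) \<open>0 < \<beta>\<close>])
      (simp_all add: R_def bottom_len_def left_len_def)
qed

theorem lemma4:
  fixes \<alpha> \<beta> lam :: real and S :: "pt set" and ps :: "pt list" and i :: nat
  assumes "\<beta> \<ge> 3 + 2 * \<alpha>" and "0 < lam" and "lam < \<alpha>"
    and "finite S" and "S \<subseteq> unit_square" and "(0, 0) \<in> S"
    and "processing_order S ps" and "i < length ps"
    and "beta_tile \<beta> (tile ps i)"
    and "right_tip \<alpha> \<beta> (tile ps i) TR" and "upper_tip \<alpha> \<beta> (tile ps i) TU"
  shows "area (tile ps i) \<le>
     \<beta> / (2 * lam * exp (\<beta> - 3 - 2 * \<alpha>)) *
       (area (par_A lam (ps ! i) (bottom_len (ps ! i) (tile ps i - TR - TU))) +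
        area (par_B lam (ps ! i) (left_len (ps ! i) (tile ps i - TR - TU))))"
proof -
  \<comment> \<open>Only the points processed before the i-th one shape its tile.\<close>
  have "set ps \<subseteq> unit_square"
    using assms(5,7) by (simp add: processing_order_def)
  then have "(!) ps ` {..<i} \<subseteq> unit_square" "ps ! i \<in> unit_square"
    using assms(8) by auto
  from area_beta_tile_at_le[OF assms(1-3) _ this assms(9-11)[unfolded tile_eq_tile_at]]
  show ?thesis
    unfolding tile_eq_tile_at by simp
qed

end
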